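(* Let $d\ge2$, $F\in(0,1)$ with $F\ne\frac12$, and let $\rho_0=F|\mathrm{GHZ}_d\rangle\langle\mathrm{GHZ}_d|+(1-F)Z_1|\mathrm{GHZ}_d\rangle\langle\mathrm{GHZ}_d|Z_1$, where $|\mathrm{GHZ}_d\rangle=(|0\cdots0\rangle+|1\cdots1\rangle)/\sqrt2$ and $Z_1$ is $\sigma_z$ on the first qubit. Let $\rho_x=U(x)\rho_0U(x)^\dagger$ with $U(x)=\exp[-\frac i2\sum_{i=1}^d x_i\sigma_z^{(i)}]$, and for $\alpha\in\mathbb{R}$ let $M(\alpha)=O(\alpha)^{\otimes d}$, $O(\alpha)=e^{i\alpha}|1\rangle\langle0|+e^{-i\alpha}|0\rangle\langle1|$. For $\alpha$ with $\sin(d\alpha)\neq0$ the error-propagation variance at $x=0$, $$V(\alpha)=\frac{\langle M(\alpha)^2\rangle-\langle M(\alpha)\rangle^2}{\big|v_1\cdot\nabla_x\langle M(\alpha)\rangle\big|^2}\Bigg|_{x=0},\quad \langle A\rangle=\mathrm{Tr}(\rho_xA),\ v_1=\tfrac{1}{\sqrt d}(1,\dots,1)^T,$$ equals $\frac{1-(2F-1)^2\cos^2(d\alpha)}{d(2F-1)^2\sin^2(d\alpha)}$; it is minimized exactly at $\alpha=\frac{(2l+1)\pi}{2d}$, $l\in\mathbb{Z}$, and the minimum value is $\frac{1}{d(2F-1)^2}$, which equals $1/\big(d(1-C)\big)$ with $C=4F(1-F)$, the inverse of the quantum Fisher information $d(1-C)$ for $\theta_1=v_1^Tx$ of this state.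
   Context: For a GHZ-diagonal $d$-qubit state with eigenvalues $\lambda^\pm_s$ on $|G^\pm_s\rangle=(|s\rangle\pm|\bar s\rangle)/\sqrt2$ (one representative $s$ per complementary pair of bit strings), $C=\sum_s\frac{4\lambda^+_s\lambda^-_s}{\lambda^+_s+\lambda^-_s}$ with terms having $\lambda^+_s+\lambda^-_s=0$ set to $0$; for the state $\rho_0$ above this gives $C=4F(1-F)$. The quantum Fisher information for $\theta_1$ under the encoding $U(x)$ is $d(1-C)$, so the claim says this measurement saturates the quantum Cramér–Rao bound. *)

theory Defs
  imports "HOL-Analysis.Analysis"
begin

text \<open>Operators on d qubits are represented as functions nat => nat => complex on the
  computational basis indices 0 ..< 2^d.  Qubit i (1 <= i <= d) of basis index k is
  the bit (k div 2^(d-i)) mod 2, i.e. qubit 1 is the most significant bit, so the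
  basis state with index k is |b_1 ... b_d>.\<close>

type_synonym cmat = "nat \<Rightarrow> nat \<Rightarrow> complex"
type_synonym cvec = "nat \<Rightarrow> complex"

definition mmul :: "nat \<Rightarrow> cmat \<Rightarrow> cmat \<Rightarrow> cmat" where
  "mmul n A B = (\<lambda>i j. \<Sum>k<n. A i k * B k j)"

definition mtrace :: "nat \<Rightarrow> cmat \<Rightarrow> complex" where
  "mtrace n A = (\<Sum>i<n. A i i)"

definition adj :: "cmat \<Rightarrow> cmat" where
  "adj A = (\<lambda>i j. cnj (A j i))"

definition outer :: "cvec \<Rightarrow> cvec \<Rightarrow> cmat" where
  "outer u v = (\<lambda>i j. u i * cnj (v j))"

definition qbit :: "nat \<Rightarrow> nat \<Rightarrow> nat \<Rightarrow> nat" where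
  "qbit d k i = (k div 2 ^ (d - i)) mod 2"

definition sz :: "nat \<Rightarrow> real" where
  "sz b = (if b = 0 then 1 else -1)"

definition ghz :: "nat \<Rightarrow> cvec" where
  "ghz d = (\<lambda>k. if k = 0 \<or> k = 2 ^ d - 1 then complex_of_real (1 / sqrt 2) else 0)"

definition Z1 :: "nat \<Rightarrow> cmat" where
  "Z1 d = (\<lambda>j k. if j = k then complex_of_real (sz (qbit d k 1)) else 0)"

definition rho0 :: "nat \<Rightarrow> real \<Rightarrow> cmat" where
  "rho0 d F = (\<lambda>i j. complex_of_real F * outer (ghz d) (ghz d) i j
     + complex_of_real (1 - F) * mmul (2^d) (Z1 d) (mmul (2^d) (outer (ghz d) (ghz d)) (Z1 d)) i j)"

text \<open>U(x) = exp(-i/2 sum_i x_i sigma_z^(i)); this operator is diagonal in the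
  computational basis, so its exponential is the diagonal matrix of exponentials.\<close>
definition Uenc :: "nat \<Rightarrow> (nat \<Rightarrow> real) \<Rightarrow> cmat" where
  "Uenc d x = (\<lambda>j k. if j = k then
      exp (- \<i> / 2 * complex_of_real (\<Sum>i\<in>{1..d}. x i * sz (qbit d k i))) else 0)"

definition rhox :: "nat \<Rightarrow> real \<Rightarrow> (nat \<Rightarrow> real) \<Rightarrow> cmat" where
  "rhox d F x = mmul (2^d) (Uenc d x) (mmul (2^d) (rho0 d F) (adj (Uenc d x)))"

text \<open>O(alpha) = e^{i alpha}|1><0| + e^{-i alpha}|0><1|, entries indexed (row, column)\<close>
definition Oop :: "real \<Rightarrow> cmat" where
  "Oop a = (\<lambda>b c. if b = 1 \<and> c = 0 then exp (\<i> * complex_of_real a)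
                 else if b = 0 \<and> c = 1 then exp (- \<i> * complex_of_real a) else 0)"

definition Mop :: "nat \<Rightarrow> real \<Rightarrow> cmat" where
  "Mop d a = (\<lambda>j k. \<Prod>i\<in>{1..d}. Oop a (qbit d j i) (qbit d k i))"

text \<open><A> = Tr(rho_x A) (real for Hermitian A; we take the real part)\<close>
definition expval :: "nat \<Rightarrow> real \<Rightarrow> (nat \<Rightarrow> real) \<Rightarrow> cmat \<Rightarrow> real" where
  "expval d F x A = Re (mtrace (2^d) (mmul (2^d) (rhox d F x) A))"

definition pderiv_at :: "((nat \<Rightarrow> real) \<Rightarrow> real) \<Rightarrow> (nat \<Rightarrow> real) \<Rightarrow> nat \<Rightarrow> real" where
  "pderiv_at f x i = deriv (\<lambda>t. f (x(i := t))) (x i)"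

definition Vvar :: "nat \<Rightarrow> real \<Rightarrow> real \<Rightarrow> real" where
  "Vvar d F a =
    (let f = (\<lambda>x. expval d F x (Mop d a));
         x0 = (\<lambda>_. 0 :: real);
         num = expval d F x0 (mmul (2^d) (Mop d a) (Mop d a)) - (f x0)\<^sup>2;
         dir = (\<Sum>i\<in>{1..d}. (1 / sqrt (real d)) * pderiv_at f x0 i)
     in num / \<bar>dir\<bar>\<^sup>2)"

text \<open>GHZ basis |G^{+-}_s> = (|s> +- |bar s>)/sqrt 2; representatives s < 2^(d-1)
  (first qubit 0), with bar s = 2^d - 1 - s.\<close>
definition ghz_vec :: "nat \<Rightarrow> nat \<Rightarrow> real \<Rightarrow> cvec" where
  "ghz_vec d s sg = (\<lambda>k. if k = s then complex_of_real (1 / sqrt 2)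
       else if k = 2 ^ d - 1 - s then complex_of_real (sg / sqrt 2) else 0)"

definition ghz_eig :: "nat \<Rightarrow> cmat \<Rightarrow> nat \<Rightarrow> real \<Rightarrow> real" where
  "ghz_eig d \<rho> s sg = Re (\<Sum>j<2^d. \<Sum>k<2^d. cnj (ghz_vec d s sg j) * \<rho> j k * ghz_vec d s sg k)"

definition ghz_C :: "nat \<Rightarrow> cmat \<Rightarrow> real" where
  "ghz_C d \<rho> = (\<Sum>s<2^(d-1).
     (let lp = ghz_eig d \<rho> s 1; lm = ghz_eig d \<rho> s (-1)
      in if lp + lm = 0 then 0 else 4 * lp * lm / (lp + lm)))"

definition qfi_theta1 :: "nat \<Rightarrow> cmat \<Rightarrow> real" where
  "qfi_theta1 d \<rho> = real d * (1 - ghz_C d \<rho>)"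

end

theory Submission
  imports Defs
begin

text \<open>Both GHZ_d and Z_1 GHZ_d lie in the span of the basis states 0...0 and 1...1, whose
  indices are 0 and mask d = 2^d - 1. Hence rho_x has only four nonzero entries: 1/2 on the
  diagonal and (2F - 1)/2 * exp (-+ i S) off it, where S = x_1 + ... + x_d. Since O(alpha)
  flips every qubit, M(alpha) swaps these two basis states with phases exp (+- i d alpha), so
  <M> = (2F - 1) cos (d alpha - S) and <M^2> = 1. With c = 2F - 1 the error-propagation
  formula gives V(alpha) = (1 - c^2) / (d c^2 sin^2 (d alpha)) + 1/d, which is minimal exactly
  where sin^2 (d alpha) = 1. In the GHZ basis only the pair s = 0 carries weight, with
  eigenvalues F and 1 - F, so C = 4F(1 - F) and d (1 - C) = d c^2.\<close>

lemma qbit_eq_bit: "qbit d m i = of_bool (bit m (d - i))"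
  by (simp add: qbit_def bit_iff_odd mod_2_eq_odd)

lemma qbit_zero [simp]: "qbit d 0 i = 0"
  by (simp add: qbit_def)

lemma qbit_mask: "i \<in> {1..d} \<Longrightarrow> qbit d (mask d) i = 1"
  by (auto simp: qbit_eq_bit bit_mask_iff)

lemma qbit_inject:
  assumes "m < 2^d" "m' < 2^d" "\<forall>i\<in>{1..d}. qbit d m i = qbit d m' i"
  shows "m = m'"
proof (rule bit_eqI)
  fix n
  show "bit m n \<longleftrightarrow> bit m' n"
  proof (cases "n < d")
    case True
    with assms(3) have "qbit d m (d - n) = qbit d m' (d - n)"
      by auto
    with True show ?thesis
      by (simp add: qbit_eq_bit of_bool_eq_iff)
  next
    case False
    then have "m < 2^n" "m' < 2^n"
      using assms(1,2) power_increasing [of d n "2::nat"] by linarith+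
    then show ?thesis
      by (simp add: bit_iff_odd)
  qed
qed

lemma sum_sum_supported:
  fixes n :: nat
  assumes "S \<subseteq> {..<n}"
    and "\<And>j k. j < n \<Longrightarrow> k < n \<Longrightarrow> f j k \<noteq> 0 \<Longrightarrow> j \<in> S \<and> k \<in> S"
  shows "(\<Sum>j<n. \<Sum>k<n. f j k) = (\<Sum>j\<in>S. \<Sum>k\<in>S. f j k)"
proof -
  have "(\<Sum>j<n. \<Sum>k<n. f j k) = (\<Sum>j<n. \<Sum>k\<in>S. f j k)"
    by (rule sum.cong [OF refl], rule sum.mono_neutral_right) (use assms in auto)
  also have "\<dots> = (\<Sum>j\<in>S. \<Sum>k\<in>S. f j k)"
    by (rule sum.mono_neutral_right) (use assms in \<open>auto intro!: sum.neutral\<close>)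
  finally show ?thesis .
qed

lemma sum_fun_upd_mem:
  fixes x :: "'a \<Rightarrow> 'b::ab_group_add"
  assumes "finite A" "i \<in> A"
  shows "sum (x(i := t)) A = t + (sum x A - x i)"
proof -
  have "sum (x(i := t)) (A - {i}) = sum x (A - {i})"
    by (rule sum.cong) auto
  then show ?thesis
    using assms by (simp add: sum.remove [of A i])
qed

lemma mmul_single:
  assumes "m < n" and "\<And>m'. m' < n \<Longrightarrow> m' \<noteq> m \<Longrightarrow> A j m' = 0"
  shows "mmul n A B j k = A j m * B m k"
proof -
  have "(\<Sum>m'<n. A j m' * B m' k) = (\<Sum>m'\<in>{m}. A j m' * B m' k)"
    by (rule sum.mono_neutral_right) (use assms in auto)
  then show ?thesis
    by (simp add: mmul_def)
qed

definition diag :: "cvec \<Rightarrow> cmat" where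
  "diag a = (\<lambda>j k. if j = k then a j else 0)"

lemma mmul_diag_left: "j < n \<Longrightarrow> mmul n (diag a) B j k = a j * B j k"
  using mmul_single [of j n "diag a"] by (simp add: diag_def)

lemma mmul_diag_right: "k < n \<Longrightarrow> mmul n A (diag b) j k = A j k * b k"
proof -
  assume "k < n"
  then have "(\<Sum>m<n. A j m * diag b m k) = (\<Sum>m\<in>{k}. A j m * diag b m k)"
    by (intro sum.mono_neutral_right) (auto simp: diag_def)
  then show ?thesis
    by (simp add: mmul_def diag_def)
qed

lemma adj_diag: "adj (diag a) = diag (\<lambda>k. cnj (a k))"
  by (auto simp: adj_def diag_def fun_eq_iff)

lemma Z1_eq_diag: "Z1 d = diag (\<lambda>k. of_real (sz (qbit d k 1)))"
  by (auto simp: Z1_def diag_def fun_eq_iff)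

lemma Uenc_eq_diag: "Uenc d x = diag (\<lambda>k. cis (- (\<Sum>i\<in>{1..d}. x i * sz (qbit d k i)) / 2))"
  by (auto simp: Uenc_def diag_def fun_eq_iff cis_conv_exp algebra_simps)

lemma ghz_eq_mask: "ghz d k = (if k = 0 \<or> k = mask d then of_real (1 / sqrt 2) else 0)"
  by (simp add: ghz_def mask_eq_exp_minus_1)

lemma rho0_entry:
  assumes "j < 2^d" "k < 2^d"
  shows "rho0 d F j k = ghz d j * cnj (ghz d k)
           * of_real (F + (1 - F) * sz (qbit d j 1) * sz (qbit d k 1))"
  using assms
  by (simp add: rho0_def Z1_eq_diag mmul_diag_left mmul_diag_right outer_def algebra_simps)

lemma rho0_support:
  assumes "j < 2^d" "k < 2^d" "rho0 d F j k \<noteq> 0"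
  shows "j \<in> {0, mask d} \<and> k \<in> {0, mask d}"
  using assms by (auto simp: rho0_entry ghz_eq_mask split: if_splits)

lemma rho0_corners:
  assumes "0 < d"
  shows "rho0 d F 0 0 = 1/2" "rho0 d F (mask d) (mask d) = 1/2"
    "rho0 d F 0 (mask d) = of_real ((2*F - 1) / 2)"
    "rho0 d F (mask d) 0 = of_real ((2*F - 1) / 2)"
proof -
  have "sz (qbit d (mask d) 1) = -1"
    using assms by (simp add: qbit_mask sz_def)
  moreover have "complex_of_real (1 / sqrt 2) * complex_of_real (1 / sqrt 2) = 1/2"
    by (simp flip: of_real_mult real_sqrt_mult)
  moreover have "mask d \<noteq> (0::nat)"
    using assms by simp
  ultimately show "rho0 d F 0 0 = 1/2" "rho0 d F (mask d) (mask d) = 1/2"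
    "rho0 d F 0 (mask d) = of_real ((2*F - 1) / 2)"
    "rho0 d F (mask d) 0 = of_real ((2*F - 1) / 2)"
    by (simp_all add: rho0_entry ghz_eq_mask sz_def field_simps)
qed

lemma rhox_entry:
  assumes "j < 2^d" "k < 2^d"
  shows "rhox d F x j k = cis (- (\<Sum>i\<in>{1..d}. x i * sz (qbit d j i)) / 2) * rho0 d F j k
           * cis ((\<Sum>i\<in>{1..d}. x i * sz (qbit d k i)) / 2)"
  using assms
  by (simp add: rhox_def Uenc_eq_diag adj_diag mmul_diag_left mmul_diag_right cis_cnj)

lemma rhox_support:
  assumes "j < 2^d" "k < 2^d" "rhox d F x j k \<noteq> 0"
  shows "j \<in> {0, mask d} \<and> k \<in> {0, mask d}"
  using assms rho0_support [of j d k F] by (auto simp: rhox_entry)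

lemma rhox_corners:
  fixes x :: "nat \<Rightarrow> real"
  assumes "0 < d"
  defines "S \<equiv> \<Sum>i\<in>{1..d}. x i"
  shows "rhox d F x 0 0 = 1/2" "rhox d F x (mask d) (mask d) = 1/2"
    "rhox d F x 0 (mask d) = of_real ((2*F - 1) / 2) * cis (- S)"
    "rhox d F x (mask d) 0 = of_real ((2*F - 1) / 2) * cis S"
proof -
  have "(\<Sum>i\<in>{1..d}. x i * sz (qbit d (mask d) i)) = (\<Sum>i\<in>{1..d}. - x i)"
    by (rule sum.cong) (simp_all add: qbit_mask sz_def)
  then have "(\<Sum>i\<in>{1..d}. x i * sz (qbit d (mask d) i)) = - S"
    by (simp add: S_def sum_negf)
  then show "rhox d F x 0 0 = 1/2" "rhox d F x (mask d) (mask d) = 1/2"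
    "rhox d F x 0 (mask d) = of_real ((2*F - 1) / 2) * cis (- S)"
    "rhox d F x (mask d) 0 = of_real ((2*F - 1) / 2) * cis S"
    using assms(1) by (simp_all add: rhox_entry rho0_corners sz_def S_def cis_mult)
qed

lemma expval_corners:
  fixes x :: "nat \<Rightarrow> real"
  assumes "0 < d"
  defines "S \<equiv> \<Sum>i\<in>{1..d}. x i"
  shows "expval d F x A = Re (A 0 0 + A (mask d) (mask d)) / 2
           + (2*F - 1) / 2 * Re (cis (- S) * A (mask d) 0 + cis S * A 0 (mask d))"
proof -
  have "mtrace (2^d) (mmul (2^d) (rhox d F x) A)
      = (\<Sum>j\<in>{0, mask d}. \<Sum>k\<in>{0, mask d}. rhox d F x j k * A k j)"
    unfolding mtrace_def mmul_def
    by (rule sum_sum_supported) (auto dest: rhox_support)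
  also have "\<dots> = (A 0 0 + A (mask d) (mask d)) / 2
      + of_real ((2*F - 1) / 2) * (cis (- S) * A (mask d) 0 + cis S * A 0 (mask d))"
    using assms(1) by (simp add: rhox_corners [OF assms(1)] S_def algebra_simps)
  finally show ?thesis
    by (simp add: expval_def)
qed

lemma Oop_nonzero: "Oop a b c \<noteq> 0 \<Longrightarrow> b + c = 1"
  by (auto simp: Oop_def split: if_splits)

lemma Mop_nonzero_complement:
  assumes "Mop d a j k \<noteq> 0" "i \<in> {1..d}"
  shows "qbit d j i + qbit d k i = 1"
  using assms Oop_nonzero [of a "qbit d j i" "qbit d k i"] by (auto simp: Mop_def)

lemma Mop_row_zero:
  assumes "k < 2^d" "Mop d a 0 k \<noteq> 0"
  shows "k = mask d"
  by (rule qbit_inject) (use assms Mop_nonzero_complement [OF assms(2)] in \<open>auto simp: qbit_mask\<close>)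

lemma Mop_row_mask:
  assumes "k < 2^d" "Mop d a (mask d) k \<noteq> 0"
  shows "k = 0"
  by (rule qbit_inject) (use assms Mop_nonzero_complement [OF assms(2)] in \<open>auto simp: qbit_mask\<close>)

lemma Mop_corners:
  assumes "0 < d"
  shows "Mop d a 0 0 = 0" "Mop d a (mask d) (mask d) = 0"
    "Mop d a (mask d) 0 = cis (real d * a)" "Mop d a 0 (mask d) = cis (- (real d * a))"
proof -
  show "Mop d a 0 0 = 0" "Mop d a (mask d) (mask d) = 0"
    using Mop_row_zero [of 0 d a] Mop_row_mask [of "mask d" d a] assms by auto
  have "Mop d a (mask d) 0 = (\<Prod>i\<in>{1..d}. cis a)"
    unfolding Mop_def by (rule prod.cong) (simp_all add: qbit_mask Oop_def cis_conv_exp)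
  then show "Mop d a (mask d) 0 = cis (real d * a)"
    by (simp flip: Complex.DeMoivre)
  have "Mop d a 0 (mask d) = (\<Prod>i\<in>{1..d}. cis (- a))"
    unfolding Mop_def by (rule prod.cong) (simp_all add: qbit_mask Oop_def cis_conv_exp)
  then show "Mop d a 0 (mask d) = cis (- (real d * a))"
    by (simp add: Complex.DeMoivre)
qed

lemma Mop_square_corners:
  fixes a :: real
  assumes d: "0 < d"
  defines "M2 \<equiv> mmul (2^d) (Mop d a) (Mop d a)"
  shows "M2 0 0 = 1" "M2 (mask d) (mask d) = 1" "M2 0 (mask d) = 0" "M2 (mask d) 0 = 0"
proof -
  have "M2 0 k = Mop d a 0 (mask d) * Mop d a (mask d) k" for k
    unfolding M2_def by (rule mmul_single) (use Mop_row_zero in auto)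
  moreover have "M2 (mask d) k = Mop d a (mask d) 0 * Mop d a 0 k" for k
    unfolding M2_def by (rule mmul_single) (use Mop_row_mask in auto)
  ultimately show "M2 0 0 = 1" "M2 (mask d) (mask d) = 1" "M2 0 (mask d) = 0" "M2 (mask d) 0 = 0"
    by (simp_all add: Mop_corners [OF d] cis_mult)
qed

lemma expval_Mop:
  assumes "0 < d"
  shows "expval d F x (Mop d a) = (2*F - 1) * cos (real d * a - (\<Sum>i\<in>{1..d}. x i))"
  using cos_minus [of "real d * a - (\<Sum>i\<in>{1..d}. x i)"]
  by (simp add: expval_corners [OF assms] Mop_corners [OF assms] cis_mult)

lemma expval_Mop_square:
  assumes "0 < d"
  shows "expval d F x (mmul (2^d) (Mop d a) (Mop d a)) = 1"
  by (simp add: expval_corners [OF assms] Mop_square_corners [OF assms])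

lemma pderiv_at_cos_sum:
  assumes "finite A" "i \<in> A"
  shows "pderiv_at (\<lambda>x. c * cos (\<theta> - sum x A)) x i = c * sin (\<theta> - sum x A)"
proof -
  have "((\<lambda>t. c * cos (\<theta> - (t + (sum x A - x i)))) has_real_derivative c * sin (\<theta> - sum x A)) (at (x i))"
    by (auto intro!: derivative_eq_intros)
  then show ?thesis
    unfolding pderiv_at_def sum_fun_upd_mem [OF assms] by (rule DERIV_imp_deriv)
qed

definition variance_profile :: "real \<Rightarrow> real \<Rightarrow> real \<Rightarrow> real" where
  "variance_profile n c a = (1 - c\<^sup>2 * (cos (n * a))\<^sup>2) / (n * c\<^sup>2 * (sin (n * a))\<^sup>2)"

text \<open>No hypothesis on \<open>sin (d * a)\<close> is needed: where it vanishes, both sides are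
  quotients by zero, hence \<open>0\<close>.\<close>

lemma Vvar_eq_variance_profile:
  assumes "0 < d"
  shows "Vvar d F a = variance_profile (real d) (2*F - 1) a"
proof -
  define c where "c = 2*F - 1"
  define f where "f = (\<lambda>x. expval d F x (Mop d a))"
  have f: "f = (\<lambda>x. c * cos (real d * a - (\<Sum>i\<in>{1..d}. x i)))"
    by (simp add: f_def c_def expval_Mop [OF assms] fun_eq_iff)
  have "pderiv_at f (\<lambda>_. 0) i = c * sin (real d * a)" if "i \<in> {1..d}" for i
    unfolding f using pderiv_at_cos_sum [OF _ that, of c "real d * a" "\<lambda>_. 0"] by simp
  then have dir: "(\<Sum>i\<in>{1..d}. 1 / sqrt (real d) * pderiv_at f (\<lambda>_. 0) i)
      = real d / sqrt (real d) * (c * sin (real d * a))"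
    by simp
  have dir_sq: "\<bar>real d / sqrt (real d) * (c * sin (real d * a))\<bar>\<^sup>2
      = real d * c\<^sup>2 * (sin (real d * a))\<^sup>2"
    using assms by (simp add: power_mult_distrib power_divide real_sqrt_pow2 power2_eq_square)
  have num: "expval d F (\<lambda>_. 0) (mmul (2^d) (Mop d a) (Mop d a)) - (f (\<lambda>_. 0))\<^sup>2
      = 1 - c\<^sup>2 * (cos (real d * a))\<^sup>2"
    by (simp add: expval_Mop_square [OF assms] f power_mult_distrib)
  have "Vvar d F a = (expval d F (\<lambda>_. 0) (mmul (2^d) (Mop d a) (Mop d a)) - (f (\<lambda>_. 0))\<^sup>2)
      / \<bar>\<Sum>i\<in>{1..d}. 1 / sqrt (real d) * pderiv_at f (\<lambda>_. 0) i\<bar>\<^sup>2"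
    unfolding Vvar_def Let_def f_def ..
  also have "\<dots> = variance_profile (real d) c a"
    unfolding num dir dir_sq variance_profile_def ..
  finally show ?thesis
    by (simp add: c_def)
qed

lemma variance_profile_eq:
  assumes "sin (n * a) \<noteq> 0" "c \<noteq> 0" "n \<noteq> 0"
  shows "variance_profile n c a = (1 - c\<^sup>2) / (n * c\<^sup>2 * (sin (n * a))\<^sup>2) + 1 / n"
  using assms by (simp add: variance_profile_def cos_squared_eq field_simps)

lemma variance_profile_le_iff:
  assumes "0 < n" "c \<noteq> 0" "c\<^sup>2 < 1" "sin (n * a) \<noteq> 0" "sin (n * b) \<noteq> 0"
  shows "variance_profile n c a \<le> variance_profile n c b \<longleftrightarrow> (sin (n * b))\<^sup>2 \<le> (sin (n * a))\<^sup>2"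
proof -
  define K where "K = (1 - c\<^sup>2) / (n * c\<^sup>2)"
  have "0 < K"
    using assms by (simp add: K_def)
  then have "K / x \<le> K / y \<longleftrightarrow> y \<le> x" if "0 < x" "0 < y" for x y
    using that by (simp add: divide_le_cancel frac_le_eq field_simps)
  moreover have "variance_profile n c t = K / (sin (n * t))\<^sup>2 + 1 / n" if "sin (n * t) \<noteq> 0" for t
    using variance_profile_eq [OF that assms(2)] assms(1) by (simp add: K_def)
  ultimately show ?thesis
    using assms(4,5) by simp
qed

lemma sin_sq_eq_1_iff:
  assumes "n \<noteq> 0"
  shows "(sin (n * a))\<^sup>2 = 1 \<longleftrightarrow> (\<exists>l::int. a = (2 * of_int l + 1) * pi / (2 * n))"
proof -
  have "n * a = of_int l * pi + pi / 2 \<longleftrightarrow> a = (2 * of_int l + 1) * pi / (2 * n)" for l :: int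
    using assms by (auto simp: field_simps)
  then show ?thesis
    by (simp add: sin_squared_eq cos_zero_iff_int2)
qed

lemma variance_profile_argmin:
  assumes "0 < n" "c \<noteq> 0" "c\<^sup>2 < 1" "sin (n * a) \<noteq> 0"
  shows "(\<forall>b. sin (n * b) \<noteq> 0 \<longrightarrow> variance_profile n c a \<le> variance_profile n c b)
           \<longleftrightarrow> (\<exists>l::int. a = (2 * of_int l + 1) * pi / (2 * n))"
proof -
  have sin_sq_le: "(sin t)\<^sup>2 \<le> 1" for t :: real
    by (metis abs_sin_le_one abs_square_le_1)
  have "sin (n * (pi / (2 * n))) = 1"
    using assms(1) by simp
  have "(\<forall>b. sin (n * b) \<noteq> 0 \<longrightarrow> variance_profile n c a \<le> variance_profile n c b)
      \<longleftrightarrow> (sin (n * a))\<^sup>2 = 1" (is "?min \<longleftrightarrow> _")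
  proof
    assume ?min
    with \<open>sin (n * (pi / (2 * n))) = 1\<close>
    have "1 \<le> (sin (n * a))\<^sup>2"
      using variance_profile_le_iff [OF assms, of "pi / (2 * n)"] by simp
    then show "(sin (n * a))\<^sup>2 = 1"
      using sin_sq_le [of "n * a"] by simp
  next
    assume "(sin (n * a))\<^sup>2 = 1"
    then show ?min
      using variance_profile_le_iff [OF assms] sin_sq_le by simp
  qed
  then show ?thesis
    using sin_sq_eq_1_iff assms(1) by simp
qed

lemma variance_profile_minimum:
  assumes "n \<noteq> 0" "a = (2 * of_int l + 1) * pi / (2 * n)"
  shows "sin (n * a) \<noteq> 0" "variance_profile n c a = 1 / (n * c\<^sup>2)"
proof -
  have "(sin (n * a))\<^sup>2 = 1"
    using sin_sq_eq_1_iff [OF assms(1)] assms(2) by blast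
  then show "sin (n * a) \<noteq> 0" "variance_profile n c a = 1 / (n * c\<^sup>2)"
    by (auto simp: variance_profile_def cos_squared_eq)
qed

lemma ghz_vec_zero:
  assumes "0 < d"
  shows "ghz_vec d 0 sg k = of_real (if k = 0 then 1 / sqrt 2 else if k = mask d then sg / sqrt 2 else 0)"
  using assms by (simp add: ghz_vec_def mask_eq_exp_minus_1)

lemma ghz_eig_rho0_zero:
  assumes "0 < d"
  shows "ghz_eig d (rho0 d F) 0 sg = (1 + sg\<^sup>2) / 4 + sg * (2*F - 1) / 2"
proof -
  have "ghz_eig d (rho0 d F) 0 sg
      = Re (\<Sum>j\<in>{0, mask d}. \<Sum>k\<in>{0, mask d}. cnj (ghz_vec d 0 sg j) * rho0 d F j k * ghz_vec d 0 sg k)"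
    unfolding ghz_eig_def by (subst sum_sum_supported) (auto dest: rho0_support)
  also have "\<dots> = (1 + sg\<^sup>2) / 4 + sg * (2*F - 1) / 2"
    using assms
    by (simp add: ghz_vec_zero [OF assms] rho0_corners [OF assms] power2_eq_square field_simps)
  finally show ?thesis .
qed

lemma ghz_eig_rho0_other:
  assumes "0 < s" "s < 2^(d - 1)"
  shows "ghz_eig d (rho0 d F) s sg = 0"
proof -
  have "s < mask d"
    using assms by (cases d) (simp_all add: mask_eq_exp_minus_1)
  then have "ghz_vec d s sg 0 = 0" "ghz_vec d s sg (mask d) = 0"
    using assms(1) by (simp_all add: ghz_vec_def mask_eq_exp_minus_1)
  then have "(\<Sum>j\<in>{0, mask d}. \<Sum>k\<in>{0, mask d}. cnj (ghz_vec d s sg j) * rho0 d F j k * ghz_vec d s sg k) = 0"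
    by (auto intro!: sum.neutral)
  moreover have "ghz_eig d (rho0 d F) s sg
      = Re (\<Sum>j\<in>{0, mask d}. \<Sum>k\<in>{0, mask d}. cnj (ghz_vec d s sg j) * rho0 d F j k * ghz_vec d s sg k)"
    unfolding ghz_eig_def by (subst sum_sum_supported) (auto dest: rho0_support)
  ultimately show ?thesis
    by simp
qed

lemma ghz_C_rho0:
  assumes "0 < d"
  shows "ghz_C d (rho0 d F) = 4 * F * (1 - F)"
proof -
  define T where "T s = (let lp = ghz_eig d (rho0 d F) s 1; lm = ghz_eig d (rho0 d F) s (-1)
      in if lp + lm = 0 then 0 else 4 * lp * lm / (lp + lm))" for s
  have "ghz_C d (rho0 d F) = (\<Sum>s\<in>{0}. T s)"
    unfolding ghz_C_def T_def [symmetric]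
    by (rule sum.mono_neutral_right) (auto simp: T_def ghz_eig_rho0_other)
  also have "\<dots> = 4 * F * (1 - F)"
  proof -
    have "ghz_eig d (rho0 d F) 0 1 = F" "ghz_eig d (rho0 d F) 0 (-1) = 1 - F"
      by (simp_all add: ghz_eig_rho0_zero [OF assms] field_simps)
    then show ?thesis
      by (simp add: T_def)
  qed
  finally show ?thesis .
qed

theorem mainTheorem8:
  fixes d :: nat and F :: real
  assumes "d \<ge> 2" and "0 < F" and "F < 1" and "F \<noteq> 1/2"
  shows "(\<forall>a::real. sin (real d * a) \<noteq> 0 \<longrightarrow>
            Vvar d F a = (1 - (2*F - 1)\<^sup>2 * (cos (real d * a))\<^sup>2)
                         / (real d * (2*F - 1)\<^sup>2 * (sin (real d * a))\<^sup>2))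
       \<and> (\<forall>a::real. sin (real d * a) \<noteq> 0 \<longrightarrow>
            ((\<forall>b::real. sin (real d * b) \<noteq> 0 \<longrightarrow> Vvar d F a \<le> Vvar d F b)
             \<longleftrightarrow> (\<exists>l::int. a = (2 * real_of_int l + 1) * pi / (2 * real d))))
       \<and> (\<forall>l::int. let a = (2 * real_of_int l + 1) * pi / (2 * real d) in
            sin (real d * a) \<noteq> 0 \<and> Vvar d F a = 1 / (real d * (2*F - 1)\<^sup>2))
       \<and> ghz_C d (rho0 d F) = 4 * F * (1 - F)
       \<and> 1 / (real d * (2*F - 1)\<^sup>2) = 1 / qfi_theta1 d (rho0 d F)"
proof -
  have d: "0 < d" "0 < real d"
    using assms(1) by simp_all
  have c: "2*F - 1 \<noteq> 0" "(2*F - 1)\<^sup>2 < 1"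
    using assms(2-4) by (simp_all add: abs_square_less_1)
  note V = Vvar_eq_variance_profile [OF d(1)]
  note C = ghz_C_rho0 [OF d(1), of F]
  have "(\<forall>b. sin (real d * b) \<noteq> 0 \<longrightarrow> Vvar d F a \<le> Vvar d F b)
      \<longleftrightarrow> (\<exists>l::int. a = (2 * real_of_int l + 1) * pi / (2 * real d))"
    if "sin (real d * a) \<noteq> 0" for a
    unfolding V by (rule variance_profile_argmin [OF d(2) c that])
  moreover have "sin (real d * a) \<noteq> 0 \<and> Vvar d F a = 1 / (real d * (2*F - 1)\<^sup>2)"
    if "a = (2 * real_of_int l + 1) * pi / (2 * real d)" for a l
    using variance_profile_minimum [of "real d" a l] d that by (simp add: V)
  moreover have "1 / (real d * (2*F - 1)\<^sup>2) = 1 / qfi_theta1 d (rho0 d F)"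
    by (simp add: qfi_theta1_def C power2_eq_square algebra_simps)
  ultimately show ?thesis
    using C by (simp add: V variance_profile_def Let_def)
qed

end
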